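(* If $G$ is a $3$-e.c. strongly regular graph with parameters $(v,k,\lambda,\mu)$, then $$\mu(k-\lambda-3)\ \ge\ v-2k+\mu-2.$$
   Context: A strongly regular graph with parameters $(v,k,\lambda,\mu)$ is a $k$-regular graph on $v$ vertices in which every pair of adjacent vertices has exactly $\lambda$ common neighbours and every pair of distinct nonadjacent vertices has exactly $\mu$ common neighbours; it has at least one edge and at least one pair of distinct nonadjacent vertices. A graph with vertex set $V$ is $n$-e.c. if for every pair of disjoint subsets $A,B\subseteq V$ with $|A\cup B|=n$ (either may be empty) there is a vertex $z\notin A\cup B$ adjacent to every vertex of $A$ and to no vertex of $B$. *)

theory Defs
  imports Main
begin

text \<open>A finite simple graph: finite vertex set V and a symmetric, irreflexive
adjacency relation E (only its restriction to V matters).\<close>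
definition simple_graph :: "'a set \<Rightarrow> ('a \<Rightarrow> 'a \<Rightarrow> bool) \<Rightarrow> bool" where
  "simple_graph V E \<longleftrightarrow> finite V \<and> (\<forall>x\<in>V. \<forall>y\<in>V. E x y \<longleftrightarrow> E y x) \<and> (\<forall>x\<in>V. \<not> E x x)"

definition nbhd :: "'a set \<Rightarrow> ('a \<Rightarrow> 'a \<Rightarrow> bool) \<Rightarrow> 'a \<Rightarrow> 'a set" where
  "nbhd V E x = {y \<in> V. E x y}"

definition strongly_regular ::
  "'a set \<Rightarrow> ('a \<Rightarrow> 'a \<Rightarrow> bool) \<Rightarrow> nat \<Rightarrow> nat \<Rightarrow> nat \<Rightarrow> nat \<Rightarrow> bool" where
  "strongly_regular V E v k lam mu \<longleftrightarrow>
     simple_graph V E \<and> card V = v \<and>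
     (\<forall>x\<in>V. card (nbhd V E x) = k) \<and>
     (\<forall>x\<in>V. \<forall>y\<in>V. E x y \<longrightarrow> card (nbhd V E x \<inter> nbhd V E y) = lam) \<and>
     (\<forall>x\<in>V. \<forall>y\<in>V. x \<noteq> y \<and> \<not> E x y \<longrightarrow> card (nbhd V E x \<inter> nbhd V E y) = mu) \<and>
     (\<exists>x\<in>V. \<exists>y\<in>V. E x y) \<and>
     (\<exists>x\<in>V. \<exists>y\<in>V. x \<noteq> y \<and> \<not> E x y)"

definition n_ec :: "nat \<Rightarrow> 'a set \<Rightarrow> ('a \<Rightarrow> 'a \<Rightarrow> bool) \<Rightarrow> bool" where
  "n_ec n V E \<longleftrightarrow>
     (\<forall>A B. A \<subseteq> V \<and> B \<subseteq> V \<and> A \<inter> B = {} \<and> card (A \<union> B) = n \<longrightarrow>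
        (\<exists>z\<in>V. z \<notin> A \<union> B \<and> (\<forall>a\<in>A. E z a) \<and> (\<forall>b\<in>B. \<not> E z b)))"

end

theory Submission
  imports Defs
begin

(* Fix two distinct nonadjacent vertices x, y and let W be the set of
   vertices that are neither x, y nor adjacent to x or y; inclusion-exclusion gives
   |W| = v - 2k + mu - 2.  Let C be the mu common neighbours of x and y.
   (1) By 3-e.c. applied to A = {x,y,w}, every w in W has a neighbour in C, so the
       sets N(c) \<inter> W for c in C cover W.
   (2) For c in C, the neighbourhood N(c) contains x, y, the lam common neighbours
       of c and x, a vertex z adjacent to c and y but not to x (3-e.c. with
       A = {c,y}, B = {x}), and the set N(c) \<inter> W, all pairwise disjoint;
       hence |N(c) \<inter> W| \<le> k - lam - 3.
   Double counting over the cover yields |W| \<le> mu (k - lam - 3). *)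

lemma nbhd_subset: "nbhd V E x \<subseteq> V"
  unfolding nbhd_def by auto

lemma finite_nbhd: "finite V \<Longrightarrow> finite (nbhd V E x)"
  using nbhd_subset finite_subset by metis

lemma strongly_regular_simple_graph:
  "strongly_regular V E v k lam mu \<Longrightarrow> simple_graph V E"
  unfolding strongly_regular_def by blast

definition far_set :: "'a set \<Rightarrow> ('a \<Rightarrow> 'a \<Rightarrow> bool) \<Rightarrow> 'a \<Rightarrow> 'a \<Rightarrow> 'a set" where
  "far_set V E x y = V - ({x, y} \<union> (nbhd V E x \<union> nbhd V E y))"

lemma card_far_set:
  assumes srg: "strongly_regular V E v k lam mu"
    and x: "x \<in> V" and y: "y \<in> V" and xy: "x \<noteq> y" and nxy: "\<not> E x y"
  shows "int (card (far_set V E x y)) = int v - 2 * int k + int mu - 2"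
proof -
  let ?N = "nbhd V E"
  have fin: "finite V" and sym: "E x y \<longleftrightarrow> E y x" and irr: "\<not> E x x" "\<not> E y y"
    using strongly_regular_simple_graph[OF srg] x y unfolding simple_graph_def by auto
  have cV: "card V = v" and degs: "card (?N x) = k" "card (?N y) = k"
    and common: "card (?N x \<inter> ?N y) = mu"
    using srg x y xy nxy unfolding strongly_regular_def by auto
  have finN: "finite (?N x)" "finite (?N y)"
    using finite_nbhd[OF fin] by auto
  have cU: "card (?N x \<union> ?N y) + mu = 2 * k"
    using card_Un_Int[OF finN] degs common by simp
  have disj: "{x, y} \<inter> (?N x \<union> ?N y) = {}"
    using irr nxy sym unfolding nbhd_def by auto
  have cU2: "card ({x, y} \<union> (?N x \<union> ?N y)) = 2 + card (?N x \<union> ?N y)"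
    using card_Un_disjoint[OF _ _ disj] finN xy by simp
  have subs: "{x, y} \<union> (?N x \<union> ?N y) \<subseteq> V"
    using x y nbhd_subset[of V E] by blast
  have "card (far_set V E x y) + card ({x, y} \<union> (?N x \<union> ?N y)) = v"
    using card_Diff_subset[OF finite_subset[OF subs fin] subs] card_mono[OF fin subs] cV
    unfolding far_set_def by simp
  then show ?thesis
    using cU2 cU by linarith
qed

lemma far_set_covered:
  assumes G: "simple_graph V E" and ec: "n_ec 3 V E"
    and x: "x \<in> V" and y: "y \<in> V" and xy: "x \<noteq> y"
  shows "far_set V E x y \<subseteq> (\<Union>c \<in> nbhd V E x \<inter> nbhd V E y. nbhd V E c \<inter> far_set V E x y)"
proof
  fix w assume w: "w \<in> far_set V E x y"
  then have wV: "w \<in> V" and wxy: "w \<noteq> x" "w \<noteq> y"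
    unfolding far_set_def by auto
  have "card ({x, y, w} \<union> {}) = 3"
    using xy wxy by auto
  then obtain z where z: "z \<in> V" "E z x" "E z y" "E z w"
    using ec x y wV unfolding n_ec_def by (elim allE[of _ "{x, y, w}"] allE[of _ "{}"]) auto
  have "z \<in> nbhd V E x \<inter> nbhd V E y"
    using z x y G unfolding simple_graph_def nbhd_def by auto
  moreover have "w \<in> nbhd V E z \<inter> far_set V E x y"
    using z w wV unfolding nbhd_def by auto
  ultimately show "w \<in> (\<Union>c \<in> nbhd V E x \<inter> nbhd V E y. nbhd V E c \<inter> far_set V E x y)"
    by blast
qed

text \<open>A common neighbour c of a non-edge xy in a 3-e.c. strongly regular graph sees
  at most k - lam - 3 far vertices: its neighbourhood also contains x, y, the lam
  common neighbours of c and x, and a witness z adjacent to c and y but not to x.\<close>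
lemma card_nbhd_far_set:
  assumes srg: "strongly_regular V E v k lam mu" and ec: "n_ec 3 V E"
    and x: "x \<in> V" and y: "y \<in> V" and xy: "x \<noteq> y" and nxy: "\<not> E x y"
    and c: "c \<in> nbhd V E x \<inter> nbhd V E y"
  shows "card (nbhd V E c \<inter> far_set V E x y) + lam + 3 \<le> k"
proof -
  let ?N = "nbhd V E" and ?W = "far_set V E x y"
  have fin: "finite V" and sym: "\<And>a b. a \<in> V \<Longrightarrow> b \<in> V \<Longrightarrow> E a b \<longleftrightarrow> E b a"
    and irr: "\<And>a. a \<in> V \<Longrightarrow> \<not> E a a"
    using strongly_regular_simple_graph[OF srg] unfolding simple_graph_def by auto
  have cV: "c \<in> V" and exc: "E c x" "E c y"
    using c sym x y unfolding nbhd_def by auto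
  have cxy: "c \<noteq> x" "c \<noteq> y"
    using exc irr x y by auto
  have degc: "card (?N c) = k" and lamc: "card (?N c \<inter> ?N x) = lam"
    using srg cV x exc(1) unfolding strongly_regular_def by auto
  have "card ({c, y} \<union> {x}) = 3"
    using cxy xy by auto
  then obtain z where z: "z \<in> V" "z \<noteq> x" "E z c" "E z y" "\<not> E z x"
    using ec x y cV cxy xy unfolding n_ec_def
    by (elim allE[of _ "{c, y}"] allE[of _ "{x}"]) auto
  have zN: "z \<in> ?N c" "z \<notin> ?N x" "z \<in> ?N y"
    using z sym cV x y unfolding nbhd_def by auto
  let ?P = "?N c \<inter> ?N x"
  have finP: "finite ?P" "finite (?N c \<inter> ?W)"
    using finite_nbhd[OF fin] by auto
  have disj: "{x, y} \<inter> ?P = {}"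
    using irr x y nxy sym unfolding nbhd_def by auto
  have "card ({x, y} \<union> ?P) = 2 + lam"
    using card_Un_disjoint[OF _ finP(1) disj] xy lamc by simp
  moreover have "({x, y} \<union> ?P) \<inter> {z} = {}"
    using zN z nxy irr[OF y] by (auto simp: nbhd_def)
  ultimately have "card ({x, y} \<union> ?P \<union> {z}) = 3 + lam"
    using card_Un_disjoint[of "{x, y} \<union> ?P" "{z}"] finP by simp
  moreover have "({x, y} \<union> ?P \<union> {z}) \<inter> (?N c \<inter> ?W) = {}"
    using zN unfolding far_set_def by auto
  ultimately have "card ({x, y} \<union> ?P \<union> {z} \<union> (?N c \<inter> ?W)) = 3 + lam + card (?N c \<inter> ?W)"
    using card_Un_disjoint[of "{x, y} \<union> ?P \<union> {z}" "?N c \<inter> ?W"] finP by simp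
  moreover have "{x, y} \<union> ?P \<union> {z} \<union> (?N c \<inter> ?W) \<subseteq> ?N c"
    using exc x y zN by (auto simp: nbhd_def)
  ultimately show ?thesis
    using card_mono[OF finite_nbhd[OF fin]] degc by (metis add.commute add.assoc)
qed

lemma card_le_sum_card_cover:
  assumes "finite C" and "\<And>c. c \<in> C \<Longrightarrow> finite (F c)" and "W \<subseteq> (\<Union>c\<in>C. F c)"
  shows "card W \<le> (\<Sum>c\<in>C. card (F c))"
proof -
  have "card W \<le> card (\<Union>c\<in>C. F c)"
    using assms by (intro card_mono) auto
  also have "\<dots> \<le> (\<Sum>c\<in>C. card (F c))"
    using assms(1) by (rule card_UN_le)
  finally show ?thesis .
qed

theorem mainTheorem6:
  fixes V :: "'a set" and E :: "'a \<Rightarrow> 'a \<Rightarrow> bool" and v k lam mu :: nat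
  assumes "strongly_regular V E v k lam mu"
    and "n_ec 3 V E"
  shows "int mu * (int k - int lam - 3) \<ge> int v - 2 * int k + int mu - 2"
proof -
  obtain x y where x: "x \<in> V" and y: "y \<in> V" and xy: "x \<noteq> y" and nxy: "\<not> E x y"
    using assms(1) unfolding strongly_regular_def by auto
  define C where "C = nbhd V E x \<inter> nbhd V E y"
  define W where "W = far_set V E x y"
  have fin: "finite V"
    using strongly_regular_simple_graph[OF assms(1)] unfolding simple_graph_def by simp
  have cC: "card C = mu"
    using assms(1) x y xy nxy unfolding strongly_regular_def C_def by auto
  have "card W \<le> (\<Sum>c\<in>C. card (nbhd V E c \<inter> W))"
    using far_set_covered[OF strongly_regular_simple_graph[OF assms(1)] assms(2) x y xy]
      finite_nbhd[OF fin]
    unfolding C_def W_def by (intro card_le_sum_card_cover) auto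
  then have "int (card W) \<le> (\<Sum>c\<in>C. int (card (nbhd V E c \<inter> W)))"
    by (simp flip: of_nat_sum)
  also have "\<dots> \<le> (\<Sum>c\<in>C. int k - int lam - 3)"
    using card_nbhd_far_set[OF assms x y xy nxy] unfolding C_def W_def
    by (intro sum_mono) force
  also have "\<dots> = int mu * (int k - int lam - 3)"
    using cC by simp
  finally show ?thesis
    using card_far_set[OF assms(1) x y xy nxy] unfolding W_def by linarith
qed

end
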